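(* An R$^*$-algebra $A$ is purely atomic if and only if there is no strictly decreasing infinite sequence $p_1> p_2>\cdots$ of projections in $A$ (equivalently, no infinite strictly descending chain of principal right ideals of $A$).
   Context: An R$^*$-algebra is a (not necessarily closed, not necessarily unital) $^*$-subalgebra $A$ of $B(H)$, $H$ a complex Hilbert space, such that every self-adjoint element of $A$ has finite spectrum. Projections are $p=p^2=p^*$, ordered by $p\le q$ iff $pq=p$. An atom is a minimal nonzero projection in $A$; $A$ is purely atomic if every projection of $A$ is a sum of finitely many atoms. *)

theory Defs
  imports "HOL-Analysis.Analysis"
begin

text \<open>A complex Hilbert space H is modelled as a real Hilbert space
 (type of class real_inner and complete_space) together with a complex structure J
 (multiplication by i): J is bounded real-linear, J (J x) = - x and J is orthogonal.
 The complex inner product is then determined by the real one (its real part).\<close>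

definition complex_structure :: "('h::{real_inner,complete_space} \<Rightarrow> 'h) \<Rightarrow> bool" where
  "complex_structure J \<longleftrightarrow> bounded_linear J \<and> (\<forall>x. J (J x) = - x) \<and> (\<forall>x y. J x \<bullet> J y = x \<bullet> y)"

definition cscale :: "('h::real_vector \<Rightarrow> 'h) \<Rightarrow> complex \<Rightarrow> 'h \<Rightarrow> 'h" where
  "cscale J c x = Re c *\<^sub>R x + Im c *\<^sub>R J x"

text \<open>B(H): bounded complex-linear operators (bounded real-linear and commuting with J)\<close>
definition bop :: "('h::{real_inner,complete_space} \<Rightarrow> 'h) \<Rightarrow> ('h \<Rightarrow> 'h) \<Rightarrow> bool" where
  "bop J T \<longleftrightarrow> bounded_linear T \<and> (\<forall>x. T (J x) = J (T x))"

text \<open>S is the Hilbert-space adjoint of T (for complex-linear T, the complex adjoint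
 coincides with the adjoint w.r.t. the real part of the inner product)\<close>
definition is_adjoint :: "('h::real_inner \<Rightarrow> 'h) \<Rightarrow> ('h \<Rightarrow> 'h) \<Rightarrow> bool" where
  "is_adjoint T S \<longleftrightarrow> (\<forall>x y. T x \<bullet> y = x \<bullet> S y)"

definition self_adjoint :: "('h::real_inner \<Rightarrow> 'h) \<Rightarrow> bool" where
  "self_adjoint T \<longleftrightarrow> is_adjoint T T"

definition op_spectrum :: "('h::{real_inner,complete_space} \<Rightarrow> 'h) \<Rightarrow> ('h \<Rightarrow> 'h) \<Rightarrow> complex set" where
  "op_spectrum J T = {c. \<not> (\<exists>S. bop J S \<and> (\<forall>x. S (T x - cscale J c x) = x)
                                        \<and> (\<forall>x. T (S x) - cscale J c (S x) = x))}"

text \<open>(not necessarily closed, not necessarily unital) *-subalgebra of B(H)\<close>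
definition star_subalgebra :: "('h::{real_inner,complete_space} \<Rightarrow> 'h) \<Rightarrow> ('h \<Rightarrow> 'h) set \<Rightarrow> bool" where
  "star_subalgebra J A \<longleftrightarrow>
     (\<forall>T\<in>A. bop J T) \<and> (\<lambda>x. 0) \<in> A \<and>
     (\<forall>S\<in>A. \<forall>T\<in>A. (\<lambda>x. S x + T x) \<in> A) \<and>
     (\<forall>c. \<forall>T\<in>A. (\<lambda>x. cscale J c (T x)) \<in> A) \<and>
     (\<forall>S\<in>A. \<forall>T\<in>A. S \<circ> T \<in> A) \<and>
     (\<forall>T\<in>A. \<exists>S\<in>A. is_adjoint T S)"

definition R_star_algebra :: "('h::{real_inner,complete_space} \<Rightarrow> 'h) \<Rightarrow> ('h \<Rightarrow> 'h) set \<Rightarrow> bool" where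
  "R_star_algebra J A \<longleftrightarrow> complex_structure J \<and> star_subalgebra J A \<and>
     (\<forall>T\<in>A. self_adjoint T \<longrightarrow> finite (op_spectrum J T))"

definition projections :: "('h::real_inner \<Rightarrow> 'h) set \<Rightarrow> ('h \<Rightarrow> 'h) set" where
  "projections A = {p\<in>A. p \<circ> p = p \<and> self_adjoint p}"

definition proj_le :: "('h \<Rightarrow> 'h) \<Rightarrow> ('h \<Rightarrow> 'h) \<Rightarrow> bool" where
  "proj_le p q \<longleftrightarrow> p \<circ> q = p"

definition proj_less :: "('h \<Rightarrow> 'h) \<Rightarrow> ('h \<Rightarrow> 'h) \<Rightarrow> bool" where
  "proj_less p q \<longleftrightarrow> proj_le p q \<and> p \<noteq> q"

definition atoms :: "('h::real_inner \<Rightarrow> 'h) set \<Rightarrow> ('h \<Rightarrow> 'h) set" where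
  "atoms A = {p\<in>projections A. p \<noteq> (\<lambda>x. 0) \<and>
                (\<forall>q\<in>projections A. proj_le q p \<longrightarrow> q = (\<lambda>x. 0) \<or> q = p)}"

definition purely_atomic :: "('h::real_inner \<Rightarrow> 'h) set \<Rightarrow> bool" where
  "purely_atomic A \<longleftrightarrow> (\<forall>p\<in>projections A. \<exists>F. finite F \<and> F \<subseteq> atoms A \<and>
                                             p = (\<lambda>x. \<Sum>a\<in>F. a x))"

end

theory Submission
  imports Defs "HOL-Computational_Algebra.Fundamental_Theorem_Algebra"
begin

(* Without infinite descending chains of projections, well-founded induction splits every
   projection p that is neither 0 nor an atom as p = q + (p - q) with 0 < q < p, and the atomic
   decompositions of q and p - q are disjoint.

   Conversely, finiteness of spectra forces a b a = c a for atoms a, b: the self-adjoint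
   compression T = a b a is annihilated by the polynomial with simple roots at its real spectrum,
   and minimality of a makes a an eigenvector of T.  Fix unit vectors x_i in the ranges of the
   atoms of a decomposition p_0 = a_1 + ... + a_k.  Then tau q = sum_i <q x_i, x_i> equals the
   number of atoms in any atomic decomposition of a projection q <= p_0, so along a strictly
   descending chain starting at p_0 the nonnegative quantity tau drops by at least 1 per step. *)

section \<open>Self-adjoint and bounded-below operators\<close>

lemma self_adjointD: "self_adjoint T \<Longrightarrow> T x \<bullet> y = x \<bullet> T y"
  by (simp add: self_adjoint_def is_adjoint_def)

lemma self_adjointI: "(\<And>x y. T x \<bullet> y = x \<bullet> T y) \<Longrightarrow> self_adjoint T"
  by (simp add: self_adjoint_def is_adjoint_def)

lemma self_adjoint_quadratic_form_eq_0:
  fixes Q :: "'a::real_inner \<Rightarrow> 'a"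
  assumes "linear Q" "self_adjoint Q" "\<And>x. Q x \<bullet> x = 0"
  shows "Q x = 0"
proof -
  have "Q x \<bullet> y = 0" for y
  proof -
    have "Q (x + y) \<bullet> (x + y) = Q x \<bullet> x + Q y \<bullet> y + 2 * (Q x \<bullet> y)"
      using assms(1) self_adjointD[OF assms(2), of y x]
      by (simp add: linear_add inner_add_left inner_add_right inner_commute)
    then show ?thesis
      using assms(3) by simp
  qed
  then show ?thesis
    using inner_eq_zero_iff by blast
qed

lemma psd_cauchy_schwarz:
  fixes S :: "'a::real_inner \<Rightarrow> 'a"
  assumes "linear S" "self_adjoint S" and psd: "\<And>x. 0 \<le> S x \<bullet> x"
  shows "(S x \<bullet> y)\<^sup>2 \<le> (S x \<bullet> x) * (S y \<bullet> y)"
proof -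
  define a b c where "a = S x \<bullet> x" and "b = S x \<bullet> y" and "c = S y \<bullet> y"
  have quadratic: "0 \<le> a + 2 * t * b + t\<^sup>2 * c" for t
  proof -
    have "0 \<le> S (x + t *\<^sub>R y) \<bullet> (x + t *\<^sub>R y)"
      by (rule psd)
    also have "\<dots> = a + 2 * t * b + t\<^sup>2 * c"
      using assms(1) self_adjointD[OF assms(2), of y x] unfolding a_def b_def c_def
      by (simp add: linear_add linear_scale inner_add_left inner_add_right inner_commute
          power2_eq_square algebra_simps)
    finally show ?thesis .
  qed
  show ?thesis
  proof (cases "c = 0")
    case True
    have "b = 0"
    proof (rule ccontr)
      assume "b \<noteq> 0"
      have "0 \<le> a + 2 * (- (a + 1) / (2 * b)) * b + (- (a + 1) / (2 * b))\<^sup>2 * c"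
        by (rule quadratic)
      also have "\<dots> = -1"
        using True \<open>b \<noteq> 0\<close> by (simp add: field_simps)
      finally show False by simp
    qed
    then show ?thesis
      using True psd[of x] unfolding a_def b_def c_def by simp
  next
    case False
    then have "c > 0"
      using psd[of y] unfolding c_def by simp
    have "0 \<le> a + 2 * (- b / c) * b + (- b / c)\<^sup>2 * c"
      by (rule quadratic)
    also have "\<dots> = (a * c - b\<^sup>2) / c"
      using \<open>c > 0\<close> by (simp add: field_simps power2_eq_square)
    finally show ?thesis
      using \<open>c > 0\<close> unfolding a_def b_def c_def by (simp add: zero_le_divide_iff)
  qed
qed

definition bounded_below :: "('a::real_normed_vector \<Rightarrow> 'b::real_normed_vector) \<Rightarrow> bool" where
  "bounded_below f \<longleftrightarrow> (\<exists>d>0. \<forall>x. d * norm x \<le> norm (f x))"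

lemma bounded_below_comp:
  assumes "bounded_below f" "bounded_below g"
  shows "bounded_below (\<lambda>x. f (g x))"
proof -
  obtain d e where "d > 0" "\<And>y. d * norm y \<le> norm (f y)" "e > 0" "\<And>x. e * norm x \<le> norm (g x)"
    using assms unfolding bounded_below_def by auto
  then have "(d * e) * norm x \<le> norm (f (g x))" for x
    by (metis mult.assoc mult_left_mono order_trans less_imp_le)
  then show ?thesis
    unfolding bounded_below_def using \<open>d > 0\<close> \<open>e > 0\<close> by (metis mult_pos_pos)
qed

lemma bounded_below_minus_iff: "bounded_below (\<lambda>x. - f x) \<longleftrightarrow> bounded_below f"
  by (simp add: bounded_below_def)

lemma psd_norm_square_le:
  fixes S :: "'a::real_inner \<Rightarrow> 'a"
  assumes "linear S" "self_adjoint S" and psd: "\<And>x. 0 \<le> S x \<bullet> x"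
    and "0 \<le> K" and K: "\<And>x. norm (S x) \<le> norm x * K"
  shows "(norm (S x))\<^sup>2 \<le> K * (S x \<bullet> x)"
proof -
  define n where "n = (norm (S x))\<^sup>2"
  have "n * n = (S x \<bullet> S x)\<^sup>2"
    unfolding n_def power2_norm_eq_inner by (simp add: power2_eq_square)
  also have "\<dots> \<le> (S x \<bullet> x) * (S (S x) \<bullet> S x)"
    using psd_cauchy_schwarz[OF assms(1,2) psd] .
  also have "\<dots> \<le> (S x \<bullet> x) * (K * n)"
  proof (rule mult_left_mono[OF _ psd])
    have "S (S x) \<bullet> S x \<le> norm (S x) * K * norm (S x)"
      using norm_cauchy_schwarz[of "S (S x)" "S x"] K[of "S x"]
      by (meson mult_right_mono norm_ge_zero order_trans)
    then show "S (S x) \<bullet> S x \<le> K * n"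
      unfolding n_def by (simp add: power2_eq_square mult_ac)
  qed
  finally have "n * n \<le> (K * (S x \<bullet> x)) * n"
    by (simp add: mult_ac)
  moreover have "0 \<le> n"
    unfolding n_def by simp
  moreover have "0 \<le> K * (S x \<bullet> x)"
    using \<open>0 \<le> K\<close> psd[of x] by simp
  ultimately show ?thesis
    unfolding n_def[symmetric] by (cases "n = 0") (auto dest: mult_right_le_imp_le)
qed

lemma psd_bounded_below_coercive:
  fixes S :: "'a::real_inner \<Rightarrow> 'a"
  assumes "bounded_linear S" "self_adjoint S" and psd: "\<And>x. 0 \<le> S x \<bullet> x"
    and "bounded_below S"
  obtains e where "e > 0" "\<And>x. e * (x \<bullet> x) \<le> S x \<bullet> x"
proof -
  obtain d where "d > 0" and d: "\<And>x. d * norm x \<le> norm (S x)"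
    using \<open>bounded_below S\<close> unfolding bounded_below_def by auto
  obtain K where "K > 0" and K: "\<And>x. norm (S x) \<le> norm x * K"
    using bounded_linear.pos_bounded[OF assms(1)] by auto
  have "d\<^sup>2 * (x \<bullet> x) \<le> K * (S x \<bullet> x)" for x
  proof -
    have "d\<^sup>2 * (x \<bullet> x) \<le> (norm (S x))\<^sup>2"
      using d[of x] \<open>d > 0\<close>
      by (metis power2_norm_eq_inner power_mono power_mult_distrib mult_nonneg_nonneg norm_ge_zero less_imp_le)
    also have "\<dots> \<le> K * (S x \<bullet> x)"
      using psd_norm_square_le[OF bounded_linear.linear[OF assms(1)] assms(2) psd _ K] \<open>K > 0\<close> by simp
    finally show ?thesis .
  qed
  then show ?thesis
    using that[of "d\<^sup>2 / K"] \<open>d > 0\<close> \<open>K > 0\<close> by (simp add: field_simps)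
qed

lemma upper_bound_quadratic_form_improve:
  fixes Q :: "'a::real_inner \<Rightarrow> 'a"
  assumes "bounded_linear Q" "self_adjoint Q" and upper: "\<And>x. Q x \<bullet> x \<le> M * (x \<bullet> x)"
    and "bounded_below (\<lambda>x. Q x - M *\<^sub>R x)"
  obtains e where "e > 0" "\<And>x. Q x \<bullet> x \<le> (M - e) * (x \<bullet> x)"
proof -
  have "bounded_below (\<lambda>x. M *\<^sub>R x - Q x)"
    using assms(4) bounded_below_minus_iff[of "\<lambda>x. Q x - M *\<^sub>R x"] by simp
  moreover have "bounded_linear (\<lambda>x. M *\<^sub>R x - Q x)"
    by (intro bounded_linear_sub bounded_linear_scaleR_right assms(1) bounded_linear_ident)
  moreover have "self_adjoint (\<lambda>x. M *\<^sub>R x - Q x)"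
    using self_adjointD[OF assms(2)] by (intro self_adjointI) (simp add: inner_diff_left inner_diff_right)
  moreover have "0 \<le> (M *\<^sub>R x - Q x) \<bullet> x" for x
    using upper[of x] by (simp add: inner_diff_left)
  ultimately obtain e where "e > 0" and e: "\<And>x. e * (x \<bullet> x) \<le> (M *\<^sub>R x - Q x) \<bullet> x"
    using psd_bounded_below_coercive by blast
  show thesis
  proof (rule that[OF \<open>e > 0\<close>])
    show "Q x \<bullet> x \<le> (M - e) * (x \<bullet> x)" for x
      using e[of x] by (simp add: inner_diff_left left_diff_distrib)
  qed
qed

lemma quadratic_form_le_Sup_sphere:
  fixes Q :: "'a::real_inner \<Rightarrow> 'a"
  assumes "linear Q" "bdd_above ((\<lambda>u. Q u \<bullet> u) ` sphere 0 1)"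
  shows "Q x \<bullet> x \<le> Sup ((\<lambda>u. Q u \<bullet> u) ` sphere 0 1) * (x \<bullet> x)"
proof (cases "x = 0")
  case True
  then show ?thesis
    using linear_0[OF assms(1)] by simp
next
  case False
  define u where "u = x /\<^sub>R norm x"
  have "u \<in> sphere 0 1"
    using False unfolding u_def by simp
  then have "Q u \<bullet> u \<le> Sup ((\<lambda>u. Q u \<bullet> u) ` sphere 0 1)"
    using assms(2) by (intro cSup_upper) auto
  moreover have "Q x \<bullet> x = (x \<bullet> x) * (Q u \<bullet> u)"
    using False unfolding u_def
    by (simp add: linear_scale[OF assms(1)] power2_norm_eq_inner[symmetric] power2_eq_square field_simps)
  ultimately show ?thesis
    by (metis inner_ge_zero mult.commute mult_left_mono)
qed

lemma self_adjoint_max_approx_eigenvalue: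
  fixes Q :: "'a::real_inner \<Rightarrow> 'a" and x0 :: 'a
  assumes "bounded_linear Q" "self_adjoint Q" "x0 \<noteq> 0"
  obtains M where "\<And>x. Q x \<bullet> x \<le> M * (x \<bullet> x)" "\<not> bounded_below (\<lambda>x. Q x - M *\<^sub>R x)"
proof -
  have lin: "linear Q"
    using assms(1) bounded_linear.linear by blast
  obtain K where K: "\<And>x. norm (Q x) \<le> norm x * K"
    using bounded_linear.bounded[OF assms(1)] by blast
  define V where "V = (\<lambda>x. Q x \<bullet> x) ` sphere 0 1"
  define M where "M = Sup V"
  have "V \<noteq> {}"
    using \<open>x0 \<noteq> 0\<close> unfolding V_def by (metis empty_iff image_is_empty mem_sphere_0 norm_sgn)
  have "bdd_above V"
  proof (rule bdd_aboveI)
    fix v assume "v \<in> V"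
    then obtain x where "norm x = 1" "v = Q x \<bullet> x"
      unfolding V_def by auto
    then show "v \<le> K"
      using norm_cauchy_schwarz[of "Q x" x] K[of x] by simp
  qed
  have upper: "Q x \<bullet> x \<le> M * (x \<bullet> x)" for x
    unfolding M_def V_def using quadratic_form_le_Sup_sphere[OF lin] \<open>bdd_above V\<close>[unfolded V_def] .
  have "\<not> bounded_below (\<lambda>x. Q x - M *\<^sub>R x)"
  proof
    assume "bounded_below (\<lambda>x. Q x - M *\<^sub>R x)"
    then obtain e where "e > 0" and e: "\<And>x. Q x \<bullet> x \<le> (M - e) * (x \<bullet> x)"
      using upper_bound_quadratic_form_improve[OF assms(1,2) upper] by blast
    have "M \<le> M - e"
      unfolding M_def
    proof (rule cSup_least[OF \<open>V \<noteq> {}\<close>])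
      fix v assume "v \<in> V"
      then obtain x where "norm x = 1" "v = Q x \<bullet> x"
        unfolding V_def by auto
      then show "v \<le> Sup V - e"
        using e[of x] unfolding M_def by (simp add: power2_norm_eq_inner[symmetric])
    qed
    then show False
      using \<open>e > 0\<close> by simp
  qed
  with upper show thesis
    using that by blast
qed

lemma self_adjoint_nonzero_approx_eigenvalue:
  fixes Q :: "'a::real_inner \<Rightarrow> 'a"
  assumes "bounded_linear Q" "self_adjoint Q" "Q x0 \<noteq> 0"
  obtains \<mu> where "\<mu> \<noteq> 0" "\<not> bounded_below (\<lambda>x. Q x - \<mu> *\<^sub>R x)"
proof -
  have lin: "linear Q"
    using assms(1) bounded_linear.linear by blast
  have "x0 \<noteq> 0"
    using assms(3) linear_0[OF lin] by auto
  obtain M where M: "\<And>x. Q x \<bullet> x \<le> M * (x \<bullet> x)" "\<not> bounded_below (\<lambda>x. Q x - M *\<^sub>R x)"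
    using self_adjoint_max_approx_eigenvalue[OF assms(1,2) \<open>x0 \<noteq> 0\<close>] by blast
  have "bounded_linear (\<lambda>x. - Q x)" "self_adjoint (\<lambda>x. - Q x)"
    using assms(1) self_adjointD[OF assms(2)] by (auto intro: bounded_linear_minus self_adjointI)
  then obtain m where m: "\<And>x. - Q x \<bullet> x \<le> m * (x \<bullet> x)" "\<not> bounded_below (\<lambda>x. - Q x - m *\<^sub>R x)"
    using self_adjoint_max_approx_eigenvalue[OF _ _ \<open>x0 \<noteq> 0\<close>] by blast
  have "\<not> bounded_below (\<lambda>x. Q x - (- m) *\<^sub>R x)"
    using m(2) bounded_below_minus_iff[of "\<lambda>x. Q x - (- m) *\<^sub>R x"] by (simp add: algebra_simps)
  moreover have "M \<noteq> 0 \<or> m \<noteq> 0"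
  proof (rule ccontr)
    assume "\<not> (M \<noteq> 0 \<or> m \<noteq> 0)"
    then have "Q x \<bullet> x = 0" for x
      using M(1)[of x] m(1)[of x] by simp
    then show False
      using self_adjoint_quadratic_form_eq_0[OF lin assms(2)] assms(3) by blast
  qed
  ultimately show thesis
    using M(2) that by (metis neg_equal_0_iff_equal)
qed

lemma cscale_of_real [simp]: "cscale J (complex_of_real c) x = c *\<^sub>R x"
  by (simp add: cscale_def)

lemma bounded_below_if_not_in_op_spectrum:
  assumes "complex_of_real r \<notin> op_spectrum J T"
  shows "bounded_below (\<lambda>x. T x - r *\<^sub>R x)"
proof -
  obtain S where "bop J S" and S: "\<And>x. S (T x - r *\<^sub>R x) = x"
    using assms unfolding op_spectrum_def by auto
  obtain K where "K > 0" and K: "\<And>y. norm (S y) \<le> norm y * K"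
    using \<open>bop J S\<close> bounded_linear.pos_bounded unfolding bop_def by blast
  have "(1 / K) * norm x \<le> norm (T x - r *\<^sub>R x)" for x
    using K[of "T x - r *\<^sub>R x"] \<open>K > 0\<close> by (simp add: S field_simps)
  then show ?thesis
    unfolding bounded_below_def using \<open>K > 0\<close> by (intro exI[of _ "1 / K"]) auto
qed

section \<open>Polynomials in an operator\<close>

definition op_poly :: "('a::real_vector \<Rightarrow> 'a) \<Rightarrow> real poly \<Rightarrow> 'a \<Rightarrow> 'a" where
  "op_poly T p = fold_coeffs (\<lambda>c f x. c *\<^sub>R x + T (f x)) p (\<lambda>x. 0)"

lemma op_poly_0 [simp]: "op_poly T 0 x = 0"
  by (simp add: op_poly_def)

lemma op_poly_pCons [simp]:
  assumes "linear T"
  shows "op_poly T (pCons c p) x = c *\<^sub>R x + T (op_poly T p x)"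
  using linear_0[OF assms] by (cases "p = 0") (simp_all add: op_poly_def fold_coeffs_def cCons_def)

lemma op_poly_add: "linear T \<Longrightarrow> op_poly T (p + q) x = op_poly T p x + op_poly T q x"
  by (induction p q arbitrary: x rule: poly_induct2) (simp_all add: linear_add algebra_simps)

lemma op_poly_smult: "linear T \<Longrightarrow> op_poly T (smult c p) x = c *\<^sub>R op_poly T p x"
  by (induction p arbitrary: x rule: pCons_induct) (simp_all add: linear_add linear_scale scaleR_add_right)

lemma op_poly_diff: "linear T \<Longrightarrow> op_poly T (p - q) x = op_poly T p x - op_poly T q x"
  using op_poly_add[of T p "- q" x] op_poly_smult[of T "- 1" q x] by simp

lemma op_poly_mult: "linear T \<Longrightarrow> op_poly T (p * q) x = op_poly T p (op_poly T q x)"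
  by (induction p arbitrary: x rule: pCons_induct) (simp_all add: op_poly_add op_poly_smult)

lemma bounded_linear_op_poly:
  assumes "bounded_linear T"
  shows "bounded_linear (op_poly T p)"
proof (induction p rule: pCons_induct)
  case 0
  have "op_poly T 0 = (\<lambda>x. 0)"
    by (simp add: fun_eq_iff)
  then show ?case
    by simp
next
  case (pCons c p)
  have "bounded_linear (\<lambda>x. c *\<^sub>R x + T (op_poly T p x))"
    by (rule bounded_linear_add[OF bounded_linear_scaleR_right bounded_linear_compose[OF assms pCons.IH]])
  moreover have "op_poly T (pCons c p) = (\<lambda>x. c *\<^sub>R x + T (op_poly T p x))"
    using bounded_linear.linear[OF assms] by (simp add: fun_eq_iff)
  ultimately show ?case
    by simp
qed

lemma op_poly_commute:
  assumes "linear T" "linear U" "\<And>x. U (T x) = T (U x)"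
  shows "U (op_poly T p x) = op_poly T p (U x)"
  using assms linear_0[OF assms(2)]
  by (induction p arbitrary: x rule: pCons_induct) (simp_all add: linear_add linear_scale)

lemma op_poly_eigenvector:
  assumes "linear T" "T v = l *\<^sub>R v"
  shows "op_poly T p v = poly p l *\<^sub>R v"
  using assms by (induction p rule: pCons_induct) (simp_all add: linear_scale scaleR_add_left)

lemma self_adjoint_op_poly:
  assumes "linear T" "self_adjoint T"
  shows "self_adjoint (op_poly T p)"
proof (induction p rule: pCons_induct)
  case 0
  then show ?case
    by (simp add: self_adjointI)
next
  case (pCons c p)
  have "T (op_poly T p x) \<bullet> y = x \<bullet> T (op_poly T p y)" for x y
    using self_adjointD[OF assms(2)] self_adjointD[OF pCons.IH]
      op_poly_commute[OF assms(1) assms(1), of p y] by simp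
  then show ?case
    using assms(1) by (intro self_adjointI) (simp add: inner_add_left inner_add_right)
qed

lemma map_poly_of_real_add: "map_poly of_real (p + q) = map_poly of_real p + map_poly of_real q"
  by (intro poly_eqI) (simp add: coeff_map_poly)

lemma map_poly_of_real_mult: "map_poly of_real (p * q) = map_poly of_real p * map_poly of_real q"
  by (intro poly_eqI) (simp add: coeff_map_poly coeff_mult)

lemma poly_map_poly_of_real: "poly (map_poly of_real p) (of_real x) = of_real (poly p x)"
  by (induction p) (simp_all add: map_poly_pCons)

lemma real_poly_quadratic_factor:
  fixes R :: "real poly"
  assumes "poly (map_poly complex_of_real R) z = 0" "Im z \<noteq> 0"
  shows "[:(Re z)\<^sup>2 + (Im z)\<^sup>2, - 2 * Re z, 1:] dvd R"
proof -
  define q where "q = [:(Re z)\<^sup>2 + (Im z)\<^sup>2, - 2 * Re z, 1:]"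
  define r where "r = R mod q"
  have "poly (map_poly complex_of_real q) z = 0"
    unfolding q_def by (simp add: map_poly_pCons complex_eq_iff power2_eq_square algebra_simps)
  moreover have "R = q * (R div q) + r"
    unfolding r_def by simp
  ultimately have root: "poly (map_poly complex_of_real r) z = 0"
    using assms(1) by (metis map_poly_of_real_add map_poly_of_real_mult poly_add poly_mult mult_zero_left add_0)
  have "degree r \<le> 1"
    using degree_mod_less'[of q R] unfolding r_def q_def by fastforce
  obtain r0 r1 where "r = [:r0, r1:]"
  proof -
    obtain r0 r' where r: "r = pCons r0 r'"
      by (rule pCons_cases)
    have "degree r' = 0"
      using \<open>degree r \<le> 1\<close> r by (cases "r' = 0") auto
    then show thesis
      using that r by (metis degree_eq_zeroE)
  qed
  then have "r = 0"
    using root assms(2) by (auto simp: map_poly_pCons complex_eq_iff)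
  then show ?thesis
    unfolding r_def q_def by (simp add: mod_eq_0_iff_dvd)
qed

lemma real_poly_no_real_root_quadratic_factor:
  fixes R :: "real poly"
  assumes "degree R \<noteq> 0" "\<And>r. poly R r \<noteq> 0"
  obtains a b R' where "b \<noteq> 0" "R = [:a\<^sup>2 + b\<^sup>2, - 2 * a, 1:] * R'"
proof -
  have "\<not> constant (poly (map_poly complex_of_real R))"
    using assms(1) by (simp add: constant_degree degree_map_poly)
  then obtain z where z: "poly (map_poly complex_of_real R) z = 0"
    using fundamental_theorem_of_algebra by blast
  have "Im z \<noteq> 0"
  proof
    assume "Im z = 0"
    then have "z = complex_of_real (Re z)"
      by (simp add: complex_eq_iff)
    then have "complex_of_real (poly R (Re z)) = 0"
      using z by (metis poly_map_poly_of_real)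
    then show False
      using assms(2) by simp
  qed
  then show thesis
    using that real_poly_quadratic_factor[OF z] by (metis dvdE)
qed

lemma bounded_below_scaleR: "c \<noteq> 0 \<Longrightarrow> bounded_below (\<lambda>x. c *\<^sub>R x)"
  unfolding bounded_below_def by (intro exI[of _ "\<bar>c\<bar>"]) simp

lemma bounded_below_op_poly_mult:
  assumes "linear T" "bounded_below (op_poly T p)" "bounded_below (op_poly T q)"
  shows "bounded_below (op_poly T (p * q))"
proof -
  have "op_poly T (p * q) = (\<lambda>x. op_poly T p (op_poly T q x))"
    by (rule ext) (rule op_poly_mult[OF assms(1)])
  then show ?thesis
    using bounded_below_comp[OF assms(2,3)] by simp
qed

lemma bounded_below_op_poly_quadratic:
  fixes T :: "'a::real_inner \<Rightarrow> 'a"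
  assumes "linear T" "self_adjoint T" "b \<noteq> 0"
  shows "bounded_below (op_poly T [:a\<^sup>2 + b\<^sup>2, - 2 * a, 1:])"
proof -
  let ?Q = "op_poly T [:a\<^sup>2 + b\<^sup>2, - 2 * a, 1:]"
  have "b\<^sup>2 * norm x \<le> norm (?Q x)" for x
  proof (cases "x = 0")
    case False
    have "?Q x = (a\<^sup>2 + b\<^sup>2) *\<^sub>R x - (2 * a) *\<^sub>R T x + T (T x)"
      using assms(1) linear_0[OF assms(1)] by (simp add: linear_add linear_diff linear_scale algebra_simps)
    then have "?Q x \<bullet> x = (a\<^sup>2 + b\<^sup>2) * (x \<bullet> x) - 2 * a * (T x \<bullet> x) + T x \<bullet> T x"
      using self_adjointD[OF assms(2), of "T x" x] by (simp add: inner_diff_left inner_add_left)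
    also have "\<dots> = (T x - a *\<^sub>R x) \<bullet> (T x - a *\<^sub>R x) + b\<^sup>2 * (x \<bullet> x)"
      by (simp add: inner_diff_left inner_diff_right inner_commute power2_eq_square algebra_simps)
    finally have "?Q x \<bullet> x = (T x - a *\<^sub>R x) \<bullet> (T x - a *\<^sub>R x) + b\<^sup>2 * (x \<bullet> x)" .
    then have "b\<^sup>2 * (norm x * norm x) \<le> ?Q x \<bullet> x"
      by (simp add: power2_norm_eq_inner[symmetric] power2_eq_square)
    also have "\<dots> \<le> norm (?Q x) * norm x"
      by (rule norm_cauchy_schwarz)
    finally show ?thesis
      using False by (simp add: mult.assoc[symmetric])
  qed simp
  then show ?thesis
    unfolding bounded_below_def using assms(3) by (intro exI[of _ "b\<^sup>2"]) simp
qed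

lemma bounded_below_op_poly:
  fixes T :: "'a::real_inner \<Rightarrow> 'a"
  assumes "linear T" "self_adjoint T" and L: "\<And>r. r \<notin> L \<Longrightarrow> bounded_below (\<lambda>x. T x - r *\<^sub>R x)"
    and "R \<noteq> 0" "\<forall>l\<in>L. poly R l \<noteq> 0"
  shows "bounded_below (op_poly T R)"
  using assms(4,5)
proof (induction "degree R" arbitrary: R rule: less_induct)
  case less
  have IH: "bounded_below (op_poly T R')" if "R = p * R'" "0 < degree p" for p R'
  proof (rule less.hyps)
    show "R' \<noteq> 0" "\<forall>l\<in>L. poly R' l \<noteq> 0"
      using less.prems that(1) by auto
    then show "degree R' < degree R"
      using less.prems that by (simp add: degree_mult_eq)
  qed
  consider (const) "degree R = 0" | (real_root) r where "poly R r = 0"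
    | (no_real_root) "degree R \<noteq> 0" "\<And>r. poly R r \<noteq> 0"
    by blast
  then show ?case
  proof cases
    case const
    then obtain c where "R = [:c:]"
      by (rule degree_eq_zeroE)
    moreover have "op_poly T [:c:] = (\<lambda>x. c *\<^sub>R x)"
      by (rule ext) (simp add: assms(1) linear_0)
    ultimately show ?thesis
      using less.prems bounded_below_scaleR[of c] by simp
  next
    case real_root
    then obtain R' where R: "R = [:- r, 1:] * R'"
      by (metis dvdE poly_eq_0_iff_dvd)
    have "op_poly T [:- r, 1:] = (\<lambda>x. T x - r *\<^sub>R x)"
      by (rule ext) (simp add: assms(1) linear_0)
    then have "bounded_below (op_poly T [:- r, 1:])"
      using L[of r] less.prems real_root by auto
    moreover have "bounded_below (op_poly T R')"
      using IH[OF R] by simp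
    ultimately show ?thesis
      unfolding R by (rule bounded_below_op_poly_mult[OF assms(1)])
  next
    case no_real_root
    then obtain a b R' where "b \<noteq> 0" and R: "R = [:a\<^sup>2 + b\<^sup>2, - 2 * a, 1:] * R'"
      by (rule real_poly_no_real_root_quadratic_factor)
    moreover have "bounded_below (op_poly T R')"
      using IH[OF R] by simp
    ultimately show ?thesis
      unfolding R using \<open>b \<noteq> 0\<close>
      by (intro bounded_below_op_poly_mult[OF assms(1)] bounded_below_op_poly_quadratic[OF assms(1,2)])
  qed
qed

lemma op_poly_annihilates_spectrum:
  fixes T :: "'a::real_inner \<Rightarrow> 'a"
  assumes "bounded_linear T" "self_adjoint T" "finite L"
    and L: "\<And>r. r \<notin> L \<Longrightarrow> bounded_below (\<lambda>x. T x - r *\<^sub>R x)"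
  shows "op_poly T (\<Prod>l\<in>L. [:- l, 1:]) x = 0"
proof (rule ccontr)
  \<comment> \<open>Otherwise P(T) has an approximate eigenvalue \<mu> \<noteq> 0, whereas P - \<mu> has no root in L,
     so that (P - \<mu>)(T) is bounded below.\<close>
  define P where "P = (\<Prod>l\<in>L. [:- l, 1:])"
  assume "op_poly T (\<Prod>l\<in>L. [:- l, 1:]) x \<noteq> 0"
  then have Px: "op_poly T P x \<noteq> 0"
    unfolding P_def .
  have lin: "linear T"
    using assms(1) bounded_linear.linear by blast
  have "x \<noteq> 0"
    using Px linear_0[OF bounded_linear.linear[OF bounded_linear_op_poly[OF assms(1)]]] by auto
  obtain M where "\<not> bounded_below (\<lambda>x. T x - M *\<^sub>R x)"
    using self_adjoint_max_approx_eigenvalue[OF assms(1,2) \<open>x \<noteq> 0\<close>] by blast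
  then have "L \<noteq> {}"
    using L by blast
  obtain \<mu> where "\<mu> \<noteq> 0" and \<mu>: "\<not> bounded_below (\<lambda>x. op_poly T P x - \<mu> *\<^sub>R x)"
    using self_adjoint_nonzero_approx_eigenvalue[OF bounded_linear_op_poly[OF assms(1)]
        self_adjoint_op_poly[OF lin assms(2)] Px] by blast
  have "poly P l = 0" if "l \<in> L" for l
    using assms(3) that unfolding P_def by (simp add: poly_prod prod_zero_iff)
  then have "\<forall>l\<in>L. poly (P - [:\<mu>:]) l \<noteq> 0"
    using \<open>\<mu> \<noteq> 0\<close> by simp
  then have "bounded_below (op_poly T (P - [:\<mu>:]))"
    using \<open>L \<noteq> {}\<close> by (intro bounded_below_op_poly[OF lin assms(2) L]) auto
  moreover have "op_poly T (P - [:\<mu>:]) = (\<lambda>x. op_poly T P x - \<mu> *\<^sub>R x)"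
    by (rule ext) (simp add: op_poly_diff lin linear_0)
  ultimately show False
    using \<mu> by simp
qed

section \<open>Projections\<close>

lemma projectionsD:
  assumes "p \<in> projections A"
  shows "p \<in> A" "p (p x) = p x" "self_adjoint p"
  using assms unfolding projections_def by (auto dest: fun_cong)

lemma proj_inner_self: "p \<in> projections A \<Longrightarrow> p x \<bullet> x = p x \<bullet> p x"
  using self_adjointD[of p "p x" x] by (simp add: projectionsD)

lemma atoms_subset_projections: "atoms A \<subseteq> projections A"
  unfolding atoms_def by auto

lemma proj_leD: "proj_le q p \<Longrightarrow> q (p x) = q x"
  unfolding proj_le_def by (metis comp_apply)

lemma proj_le_trans: "proj_le p q \<Longrightarrow> proj_le q r \<Longrightarrow> proj_le p r"
  unfolding proj_le_def by (metis comp_assoc)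

lemma proj_le_descending_chain_start:
  assumes "f 0 \<in> projections A" "\<And>n. proj_less (f (Suc n)) (f n)"
  shows "proj_le (f n) (f 0)"
proof (induction n)
  case 0
  then show ?case
    using assms(1) unfolding projections_def proj_le_def by simp
next
  case (Suc n)
  then show ?case
    using proj_le_trans assms(2)[of n] unfolding proj_less_def by blast
qed

lemma proj_le_range:
  assumes "p \<in> projections A" "q \<in> projections A" "proj_le q p"
  shows "p (q x) = q x"
proof -
  have "p (q x) \<bullet> z = q x \<bullet> z" for z
    using self_adjointD[OF projectionsD(3)[OF assms(1)]] self_adjointD[OF projectionsD(3)[OF assms(2)]]
      proj_leD[OF assms(3)] by metis
  then show ?thesis
    using vector_eq_rdot by blast
qed

lemma proj_le_summand:
  assumes "q \<in> projections A" "finite G" "G \<subseteq> projections A" "q = (\<lambda>x. \<Sum>b\<in>G. b x)" "b \<in> G"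
  shows "proj_le b q"
proof -
  have b: "b \<in> projections A"
    using assms(3,5) by blast
  have "q (b x) = b x" for x
  proof -
    define y where "y = b x"
    have qq: "q y \<bullet> y = q y \<bullet> q y"
      using proj_inner_self[OF assms(1)] .
    have "y \<bullet> y = b y \<bullet> y"
      unfolding y_def by (simp add: projectionsD(2)[OF b])
    also have "\<dots> \<le> (\<Sum>c\<in>G. c y \<bullet> y)"
      using assms(2,3,5) by (intro member_le_sum) (auto simp: proj_inner_self)
    also have "\<dots> = q y \<bullet> y"
      using assms(4) by (simp add: inner_sum_left)
    finally have lower: "y \<bullet> y \<le> q y \<bullet> y" .
    have "norm (q y) * norm (q y) \<le> norm (q y) * norm y"
      using norm_cauchy_schwarz[of "q y" y] qq by (simp add: dot_square_norm power2_eq_square)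
    then have "norm (q y) \<le> norm y"
      by (cases "q y = 0") (simp_all add: mult_le_cancel_left_pos)
    then have upper: "q y \<bullet> y \<le> y \<bullet> y"
      using qq by (simp add: dot_square_norm power_mono)
    have "(y - q y) \<bullet> (y - q y) = y \<bullet> y - q y \<bullet> y"
      using qq by (simp add: inner_diff_left inner_diff_right inner_commute)
    also have "\<dots> = 0"
      using lower upper by simp
    finally show ?thesis
      unfolding y_def by simp
  qed
  then have "b (q x) \<bullet> z = b x \<bullet> z" for x z
    using self_adjointD[OF projectionsD(3)[OF b]] self_adjointD[OF projectionsD(3)[OF assms(1)]]
    by (simp only:)
  then show ?thesis
    unfolding proj_le_def using vector_eq_rdot by (metis comp_apply ext)
qed

section \<open>Atoms in star-algebras of operators\<close>

locale star_algebra =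
  fixes J :: "'h::{real_inner,complete_space} \<Rightarrow> 'h" and A :: "('h \<Rightarrow> 'h) set"
  assumes subalgebra: "star_subalgebra J A"
begin

lemma bounded_linear_mem: "T \<in> A \<Longrightarrow> bounded_linear T"
  using subalgebra unfolding star_subalgebra_def bop_def by blast

lemma linear_mem: "T \<in> A \<Longrightarrow> linear T"
  using bounded_linear_mem bounded_linear.linear by blast

lemma zero_mem: "(\<lambda>x. 0) \<in> A"
  using subalgebra unfolding star_subalgebra_def by blast

lemma add_mem: "S \<in> A \<Longrightarrow> T \<in> A \<Longrightarrow> (\<lambda>x. S x + T x) \<in> A"
  using subalgebra unfolding star_subalgebra_def by blast

lemma scaleR_mem:
  assumes "T \<in> A"
  shows "(\<lambda>x. c *\<^sub>R T x) \<in> A"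
proof -
  have "(\<lambda>x. cscale J (complex_of_real c) (T x)) \<in> A"
    using assms subalgebra unfolding star_subalgebra_def by blast
  then show ?thesis
    by simp
qed

lemma comp_mem: "S \<in> A \<Longrightarrow> T \<in> A \<Longrightarrow> (\<lambda>x. S (T x)) \<in> A"
  using subalgebra unfolding star_subalgebra_def comp_def by blast

lemma diff_mem:
  assumes "S \<in> A" "T \<in> A"
  shows "(\<lambda>x. S x - T x) \<in> A"
proof -
  have "(\<lambda>x. S x + (- 1) *\<^sub>R T x) \<in> A"
    by (intro add_mem scaleR_mem assms)
  then show ?thesis
    by simp
qed

lemma op_poly_comp_mem:
  assumes "T \<in> A" "S \<in> A"
  shows "(\<lambda>x. op_poly T p (S x)) \<in> A"
proof (induction p rule: pCons_induct)
  case 0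
  then show ?case
    using zero_mem by simp
next
  case (pCons c p)
  then show ?case
    using add_mem[OF scaleR_mem[OF assms(2)] comp_mem[OF assms(1) pCons.IH]] linear_mem[OF assms(1)]
    by simp
qed

lemma diff_proj:
  assumes "p \<in> projections A" "q \<in> projections A" "proj_le q p"
  shows "(\<lambda>x. p x - q x) \<in> projections A" "proj_le (\<lambda>x. p x - q x) p"
proof -
  have pq: "p (q x) = q x" and qp: "q (p x) = q x" for x
    using proj_le_range[OF assms] proj_leD[OF assms(3)] by auto
  have "(\<lambda>x. p x - q x) \<in> A"
    using diff_mem projectionsD(1) assms(1,2) by blast
  moreover have "p (p x - q x) - q (p x - q x) = p x - q x" for x
    using linear_mem[OF projectionsD(1)[OF assms(1)]] linear_mem[OF projectionsD(1)[OF assms(2)]]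
      projectionsD(2)[OF assms(1)] projectionsD(2)[OF assms(2)] pq qp by (simp add: linear_diff)
  moreover have "self_adjoint (\<lambda>x. p x - q x)"
    using self_adjointD[OF projectionsD(3)[OF assms(1)]] self_adjointD[OF projectionsD(3)[OF assms(2)]]
    by (intro self_adjointI) (simp add: inner_diff_left inner_diff_right)
  ultimately show "(\<lambda>x. p x - q x) \<in> projections A"
    unfolding projections_def by (simp add: comp_def)
  show "proj_le (\<lambda>x. p x - q x) p"
    unfolding proj_le_def using projectionsD(2)[OF assms(1)] qp by (simp add: comp_def)
qed

lemma atom_nonzero: "a \<in> atoms A \<Longrightarrow> \<exists>y. a y \<noteq> 0"
  unfolding atoms_def by (auto simp: fun_eq_iff)

lemma atom_not_le_complement:
  assumes "a \<in> atoms A" "proj_le a q" "proj_le q p"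
  shows "\<not> proj_le a (\<lambda>x. p x - q x)"
proof
  assume "proj_le a (\<lambda>x. p x - q x)"
  have "linear a"
    using assms(1) atoms_subset_projections projectionsD(1) linear_mem by blast
  have "a x = 0" for x
  proof -
    have "a x = a (p x) - a (q x)"
      using proj_leD[OF \<open>proj_le a (\<lambda>x. p x - q x)\<close>, of x] \<open>linear a\<close> by (simp add: linear_diff)
    also have "\<dots> = 0"
      using proj_leD[OF assms(2)] proj_leD[OF proj_le_trans[OF assms(2,3)]] by simp
    finally show ?thesis .
  qed
  then show False
    using atom_nonzero[OF assms(1)] by blast
qed

lemma sum_atoms_split:
  assumes "p \<in> projections A" "q \<in> projections A" "proj_le q p"
    and F1: "finite F1" "F1 \<subseteq> atoms A" "q = (\<lambda>x. \<Sum>a\<in>F1. a x)"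
    and F2: "finite F2" "F2 \<subseteq> atoms A" "(\<lambda>x. p x - q x) = (\<lambda>x. \<Sum>a\<in>F2. a x)"
  shows "p = (\<lambda>x. \<Sum>a\<in>F1 \<union> F2. a x)"
proof -
  have disjoint: "F1 \<inter> F2 = {}"
  proof (rule ccontr)
    assume "F1 \<inter> F2 \<noteq> {}"
    then obtain a where "a \<in> F1" "a \<in> F2"
      by blast
    then have "proj_le a q" "proj_le a (\<lambda>x. p x - q x)"
      using proj_le_summand[OF assms(2) F1(1) _ F1(3)] proj_le_summand[OF diff_proj(1)[OF assms(1-3)] F2(1) _ F2(3)]
        F1(2) F2(2) atoms_subset_projections by blast+
    then show False
      using atom_not_le_complement[OF _ _ assms(3)] \<open>a \<in> F1\<close> F1(2) by blast
  qed
  show ?thesis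
  proof
    fix x
    have "p x = q x + (p x - q x)"
      by simp
    also have "\<dots> = (\<Sum>a\<in>F1. a x) + (\<Sum>a\<in>F2. a x)"
      using fun_cong[OF F1(3), of x] fun_cong[OF F2(3), of x] by simp
    also have "\<dots> = (\<Sum>a\<in>F1 \<union> F2. a x)"
      using F1(1) F2(1) disjoint by (simp add: sum.union_disjoint)
    finally show "p x = (\<Sum>a\<in>F1 \<union> F2. a x)" .
  qed
qed

lemma sum_of_atoms_if_strictly_below_are:
  assumes p: "p \<in> projections A"
    and below: "\<And>q. q \<in> projections A \<Longrightarrow> proj_less q p \<Longrightarrow>
                  \<exists>F. finite F \<and> F \<subseteq> atoms A \<and> q = (\<lambda>x. \<Sum>a\<in>F. a x)"
  shows "\<exists>F. finite F \<and> F \<subseteq> atoms A \<and> p = (\<lambda>x. \<Sum>a\<in>F. a x)"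
proof -
  consider "p = (\<lambda>x. 0)" | "p \<in> atoms A"
    | q where "q \<in> projections A" "proj_le q p" "q \<noteq> (\<lambda>x. 0)" "q \<noteq> p"
    using p unfolding atoms_def by blast
  then show ?thesis
  proof cases
    case 1
    then show ?thesis
      by (intro exI[of _ "{}"]) simp
  next
    case 2
    then show ?thesis
      by (intro exI[of _ "{p}"]) simp
  next
    case (3 q)
    note d = diff_proj[OF p 3(1,2)]
    have "(\<lambda>x. p x - q x) \<noteq> p"
    proof
      assume eq: "(\<lambda>x. p x - q x) = p"
      have "q x = 0" for x
        using fun_cong[OF eq, of x] by simp
      then show False
        using \<open>q \<noteq> (\<lambda>x. 0)\<close> by blast
    qed
    obtain F1 where F1: "finite F1" "F1 \<subseteq> atoms A" "q = (\<lambda>x. \<Sum>a\<in>F1. a x)"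
      using below[OF 3(1)] 3 unfolding proj_less_def by blast
    obtain F2 where F2: "finite F2" "F2 \<subseteq> atoms A" "(\<lambda>x. p x - q x) = (\<lambda>x. \<Sum>a\<in>F2. a x)"
      using below[OF d(1)] d(2) \<open>(\<lambda>x. p x - q x) \<noteq> p\<close> unfolding proj_less_def by blast
    have "p = (\<lambda>x. \<Sum>a\<in>F1 \<union> F2. a x)"
      by (rule sum_atoms_split[OF p 3(1,2) F1 F2])
    then show ?thesis
      using F1(1,2) F2(1,2) by (intro exI[of _ "F1 \<union> F2"]) simp
  qed
qed

lemma purely_atomic_if_no_descending_chain:
  assumes "\<not> (\<exists>f. \<forall>n. f n \<in> projections A \<and> proj_less (f (Suc n)) (f n))"
  shows "purely_atomic A"
proof -
  define strictly_below where
    "strictly_below = {(q, p). q \<in> projections A \<and> p \<in> projections A \<and> proj_less q p}"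
  have "wf strictly_below"
    unfolding wf_iff_no_infinite_down_chain
  proof
    assume "\<exists>f. \<forall>i. (f (Suc i), f i) \<in> strictly_below"
    then have "\<exists>f. \<forall>n. f n \<in> projections A \<and> proj_less (f (Suc n)) (f n)"
      unfolding strictly_below_def by blast
    then show False
      using assms by blast
  qed
  have "p \<in> projections A \<longrightarrow> (\<exists>F. finite F \<and> F \<subseteq> atoms A \<and> p = (\<lambda>x. \<Sum>a\<in>F. a x))" for p
  proof (induction p rule: wf_induct_rule[OF \<open>wf strictly_below\<close>])
    case (1 p)
    show ?case
      using sum_of_atoms_if_strictly_below_are[of p] "1" unfolding strictly_below_def by blast
  qed
  then show ?thesis
    unfolding purely_atomic_def by blast
qed

lemma atom_scaleR_cancel:
  assumes "a \<in> atoms A" "\<And>x. c *\<^sub>R a x = d *\<^sub>R a x"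
  shows "c = d"
proof -
  obtain y where "a y \<noteq> 0"
    using atom_nonzero[OF assms(1)] by blast
  then show ?thesis
    using assms(2)[of y] by (simp add: scaleR_cancel_right)
qed

lemma atom_unit_vector:
  assumes "a \<in> atoms A"
  obtains v where "a v = v" "norm v = 1"
proof -
  have a: "a \<in> projections A"
    using assms atoms_subset_projections by blast
  obtain y where "a y \<noteq> 0"
    using atom_nonzero[OF assms] by blast
  then show thesis
    using that[of "a y /\<^sub>R norm (a y)"] linear_mem[OF projectionsD(1)[OF a]] projectionsD(2)[OF a]
    by (simp add: linear_scale)
qed

lemma scaled_projection_below_atom:
  assumes "a \<in> atoms A" "F \<in> A" "self_adjoint F" "F \<noteq> (\<lambda>x. 0)" "c \<noteq> 0"
    and "\<And>x. F (a x) = F x" "\<And>x. F (F x) = c *\<^sub>R F x"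
  shows "F x = c *\<^sub>R a x"
proof -
  define E where "E = (\<lambda>x. (1 / c) *\<^sub>R F x)"
  have "E \<in> projections A"
    unfolding projections_def
  proof (intro CollectI conjI)
    show "E \<in> A"
      unfolding E_def using scaleR_mem[OF assms(2)] .
    show "E \<circ> E = E"
      unfolding E_def using assms(5,7) linear_mem[OF assms(2)] by (simp add: fun_eq_iff linear_scale)
    show "self_adjoint E"
      unfolding E_def using self_adjointD[OF assms(3)] by (intro self_adjointI) simp
  qed
  moreover have "proj_le E a"
    unfolding proj_le_def E_def using assms(6) by (simp add: comp_def)
  moreover have "E \<noteq> (\<lambda>x. 0)"
    unfolding E_def using assms(4,5) by (auto simp: fun_eq_iff)
  ultimately have "E = a"
    using assms(1) unfolding atoms_def by blast
  have "F x = c *\<^sub>R ((1 / c) *\<^sub>R F x)"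
    using assms(5) by simp
  also have "\<dots> = c *\<^sub>R a x"
    using fun_cong[OF \<open>E = a\<close>, of x] unfolding E_def by simp
  finally show ?thesis .
qed

lemma atom_compression_eigenvalue:
  assumes a: "a \<in> atoms A" and "T \<in> A" "self_adjoint T"
    and Ta: "\<And>x. T (a x) = T x" and aT: "\<And>x. a (T x) = T x"
    and annihilated: "\<And>x. op_poly T ([:- l, 1:] * P) (a x) = 0"
    and "poly P l \<noteq> 0" and "op_poly T P (a x0) \<noteq> 0"
  shows "T (a x) = l *\<^sub>R a x"
proof -
  have ap: "a \<in> projections A"
    using a atoms_subset_projections by blast
  have lin: "linear T"
    using linear_mem[OF \<open>T \<in> A\<close>] .
  define F where "F = (\<lambda>x. op_poly T P (a x))"
  have "a (T x) = T (a x)" for x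
    using Ta aT by simp
  then have a_commute: "a (op_poly T P x) = op_poly T P (a x)" for x
    by (rule op_poly_commute[OF lin linear_mem[OF projectionsD(1)[OF ap]]])
  have eigen: "T (F x) = l *\<^sub>R F x" for x
  proof -
    have "op_poly T [:- l, 1:] (F x) = 0"
      using annihilated[of x] unfolding F_def op_poly_mult[OF lin] .
    then show ?thesis
      using linear_0[OF lin] by (simp add: lin)
  qed
  \<comment> \<open>F / P(l) is a projection below the atom a\<close>
  have "F x = poly P l *\<^sub>R a x" for x
  proof (rule scaled_projection_below_atom[OF a])
    show "F \<in> A"
      unfolding F_def using op_poly_comp_mem[OF \<open>T \<in> A\<close> projectionsD(1)[OF ap]] .
    show "self_adjoint F"
    proof (rule self_adjointI)
      fix x y
      have "F x \<bullet> y = a x \<bullet> op_poly T P y"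
        unfolding F_def by (rule self_adjointD[OF self_adjoint_op_poly[OF lin \<open>self_adjoint T\<close>]])
      also have "\<dots> = x \<bullet> F y"
        unfolding F_def a_commute[symmetric] by (rule self_adjointD[OF projectionsD(3)[OF ap]])
      finally show "F x \<bullet> y = x \<bullet> F y" .
    qed
    show "F \<noteq> (\<lambda>x. 0)"
    proof
      assume "F = (\<lambda>x. 0)"
      then show False
        using \<open>op_poly T P (a x0) \<noteq> 0\<close> fun_cong[of F _ x0] unfolding F_def by simp
    qed
    show "F (a x) = F x" for x
      unfolding F_def using projectionsD(2)[OF ap] by simp
    show "F (F x) = poly P l *\<^sub>R F x" for x
      unfolding F_def using op_poly_eigenvector[OF lin eigen[unfolded F_def]] a_commute projectionsD(2)[OF ap]
      by simp
  qed (use \<open>poly P l \<noteq> 0\<close> in simp)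
  then have "poly P l *\<^sub>R T (a x) = poly P l *\<^sub>R (l *\<^sub>R a x)"
    using eigen[of x] lin by (simp add: linear_scale)
  then show ?thesis
    using \<open>poly P l \<noteq> 0\<close> by (simp del: scaleR_scaleR)
qed

lemma atom_eigenvector_if_annihilated:
  assumes a: "a \<in> atoms A" and "T \<in> A" "self_adjoint T"
    and Ta: "\<And>x. T (a x) = T x" and aT: "\<And>x. a (T x) = T x"
    and "finite S" "\<And>x. op_poly T (\<Prod>l\<in>S. [:- l, 1:]) (a x) = 0"
  shows "\<exists>c. \<forall>x. T (a x) = c *\<^sub>R a x"
  using assms(6,7)
proof (induction S rule: finite_induct)
  case empty
  have lin: "linear T"
    using linear_mem[OF \<open>T \<in> A\<close>] .
  then have "a x = 0" for x
    using empty linear_0[OF lin] by (simp add: one_pCons)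
  then show ?case
    using linear_0[OF lin] by simp
next
  case (insert l S)
  show ?case
  proof (cases "\<exists>x0. op_poly T (\<Prod>l\<in>S. [:- l, 1:]) (a x0) \<noteq> 0")
    case True
    then obtain x0 where "op_poly T (\<Prod>l\<in>S. [:- l, 1:]) (a x0) \<noteq> 0"
      by blast
    moreover have "poly (\<Prod>l\<in>S. [:- l, 1:]) l \<noteq> 0"
      using insert.hyps by (simp add: poly_prod)
    moreover have "op_poly T ([:- l, 1:] * (\<Prod>l\<in>S. [:- l, 1:])) (a x) = 0" for x
      using insert.prems[of x] insert.hyps by simp
    ultimately show ?thesis
      using atom_compression_eigenvalue[OF a \<open>T \<in> A\<close> \<open>self_adjoint T\<close> Ta aT] by blast
  next
    case False
    then show ?thesis
      using insert.IH by blast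
  qed
qed

lemma atom_compressions_eq:
  assumes a: "a \<in> atoms A" and b: "b \<in> atoms A"
    and aba: "\<And>x. a (b (a x)) = c *\<^sub>R a x" and bab: "\<And>x. b (a (b x)) = d *\<^sub>R b x"
  shows "c = d"
proof -
  have ap: "a \<in> projections A" and bp: "b \<in> projections A"
    using a b atoms_subset_projections by blast+
  have lin: "linear a" "linear b"
    using linear_mem projectionsD(1) ap bp by blast+
  have "(c * c) *\<^sub>R a x = (d * c) *\<^sub>R a x" for x
  proof -
    have "(c * c) *\<^sub>R a x = c *\<^sub>R a (b (a x))"
      using aba[of x] by simp
    also have "\<dots> = a (b (a (b (a x))))"
      using aba[of "b (a x)"] by simp
    also have "\<dots> = d *\<^sub>R a (b (a x))"
      using bab[of "a x"] lin(1) by (simp add: linear_scale)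
    also have "\<dots> = (d * c) *\<^sub>R a x"
      using aba[of x] by simp
    finally show ?thesis .
  qed
  moreover have "(d * d) *\<^sub>R b x = (c * d) *\<^sub>R b x" for x
  proof -
    have "(d * d) *\<^sub>R b x = d *\<^sub>R b (a (b x))"
      using bab[of x] by simp
    also have "\<dots> = b (a (b (a (b x))))"
      using bab[of "a (b x)"] by simp
    also have "\<dots> = c *\<^sub>R b (a (b x))"
      using aba[of "b x"] lin(2) by (simp add: linear_scale)
    also have "\<dots> = (c * d) *\<^sub>R b x"
      using bab[of x] by simp
    finally show ?thesis .
  qed
  ultimately have "c * c = d * c" "d * d = c * d"
    using atom_scaleR_cancel[OF a] atom_scaleR_cancel[OF b] by blast+
  then show ?thesis
    by (cases "c = 0") simp_all
qed

end

locale R_star_subalgebra = star_algebra +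
  assumes finite_spectrum: "\<And>T. T \<in> A \<Longrightarrow> self_adjoint T \<Longrightarrow> finite (op_spectrum J T)"
begin

lemma annihilating_poly:
  assumes "T \<in> A" "self_adjoint T"
  obtains L where "finite L" "\<And>x. op_poly T (\<Prod>l\<in>L. [:- l, 1:]) x = 0"
proof -
  define L where "L = complex_of_real -` op_spectrum J T"
  have "finite L"
    unfolding L_def using finite_spectrum[OF assms] by (intro finite_vimageI) (auto simp: inj_on_def)
  moreover have "bounded_below (\<lambda>x. T x - r *\<^sub>R x)" if "r \<notin> L" for r
    using that bounded_below_if_not_in_op_spectrum unfolding L_def by blast
  ultimately show thesis
    using that op_poly_annihilates_spectrum[OF bounded_linear_mem[OF assms(1)] assms(2)] by blast
qed

lemma atom_compression:
  assumes a: "a \<in> atoms A" and "b \<in> A" "self_adjoint b"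
  obtains c where "\<And>x. a (b (a x)) = c *\<^sub>R a x"
proof -
  have ap: "a \<in> projections A"
    using a atoms_subset_projections by blast
  define T where "T = (\<lambda>x. a (b (a x)))"
  have "T \<in> A"
    unfolding T_def using comp_mem[OF projectionsD(1)[OF ap] comp_mem[OF \<open>b \<in> A\<close> projectionsD(1)[OF ap]]] .
  have "self_adjoint T"
    unfolding T_def using self_adjointD[OF projectionsD(3)[OF ap]] self_adjointD[OF \<open>self_adjoint b\<close>]
    by (intro self_adjointI) (simp only:)
  have Ta: "T (a x) = T x" and aT: "a (T x) = T x" for x
    unfolding T_def using projectionsD(2)[OF ap] by simp_all
  obtain L where "finite L" "\<And>x. op_poly T (\<Prod>l\<in>L. [:- l, 1:]) x = 0"
    using annihilating_poly[OF \<open>T \<in> A\<close> \<open>self_adjoint T\<close>] by blast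
  then obtain c where "\<And>x. T (a x) = c *\<^sub>R a x"
    using atom_eigenvector_if_annihilated[OF a \<open>T \<in> A\<close> \<open>self_adjoint T\<close> Ta aT] by blast
  then show thesis
    using that Ta unfolding T_def by metis
qed

lemma trace_atom_below:
  assumes F: "finite F" "F \<subseteq> atoms A"
    and X: "\<And>a. a \<in> F \<Longrightarrow> a (X a) = X a" "\<And>a. a \<in> F \<Longrightarrow> norm (X a) = 1"
    and b: "b \<in> atoms A" "proj_le b (\<lambda>x. \<Sum>a\<in>F. a x)"
  shows "(\<Sum>a\<in>F. b (X a) \<bullet> X a) = 1"
proof -
  have bp: "b \<in> projections A"
    using b(1) atoms_subset_projections by blast
  have ap: "a \<in> projections A" if "a \<in> F" for a
    using that F(2) atoms_subset_projections by blast
  have "\<forall>a\<in>F. \<exists>c. \<forall>x. a (b (a x)) = c *\<^sub>R a x"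
    using atom_compression[OF _ projectionsD(1,3)[OF bp]] F(2) by blast
  then obtain c where aba: "\<And>a x. a \<in> F \<Longrightarrow> a (b (a x)) = c a *\<^sub>R a x"
    by metis
  have bab: "b (a (b x)) = c a *\<^sub>R b x" if aF: "a \<in> F" for a x
  proof -
    obtain d where d: "\<And>x. b (a (b x)) = d *\<^sub>R b x"
      using atom_compression[OF b(1) projectionsD(1,3)[OF ap[OF aF]]] by blast
    have "c a = d"
      using atom_compressions_eq[OF _ b(1) aba d] aF F(2) by blast
    then show ?thesis
      using d by simp
  qed
  have "b (X a) \<bullet> X a = c a" if "a \<in> F" for a
  proof -
    have "b (X a) \<bullet> X a = b (a (X a)) \<bullet> a (X a)"
      using X(1)[OF that] by simp
    also have "\<dots> = a (b (a (X a))) \<bullet> X a"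
      by (rule self_adjointD[OF projectionsD(3)[OF ap[OF that]], symmetric])
    also have "\<dots> = (c a *\<^sub>R X a) \<bullet> X a"
      using aba[OF that, of "X a"] X(1)[OF that] by simp
    also have "\<dots> = c a"
      using X(2)[OF that] by (simp add: dot_square_norm)
    finally show ?thesis .
  qed
  moreover have "(\<Sum>a\<in>F. c a) = 1"
  proof (rule atom_scaleR_cancel[OF b(1)])
    fix x
    have "b x = b (\<Sum>a\<in>F. a (b x))"
      using proj_leD[OF b(2), of "b x"] projectionsD(2)[OF bp] by simp
    also have "\<dots> = (\<Sum>a\<in>F. c a) *\<^sub>R b x"
      using bab linear_mem[OF projectionsD(1)[OF bp]] by (simp add: linear_sum scaleR_sum_left)
    finally show "(\<Sum>a\<in>F. c a) *\<^sub>R b x = 1 *\<^sub>R b x"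
      by simp
  qed
  ultimately show ?thesis
    by simp
qed

lemma trace_sum_atoms_below:
  assumes F: "finite F" "F \<subseteq> atoms A"
    and X: "\<And>a. a \<in> F \<Longrightarrow> a (X a) = X a" "\<And>a. a \<in> F \<Longrightarrow> norm (X a) = 1"
    and G: "q \<in> projections A" "finite G" "G \<subseteq> atoms A" "q = (\<lambda>x. \<Sum>b\<in>G. b x)"
    and below: "proj_le q (\<lambda>x. \<Sum>a\<in>F. a x)"
  shows "(\<Sum>a\<in>F. q (X a) \<bullet> X a) = card G"
proof -
  have G_proj: "G \<subseteq> projections A"
    using G(3) atoms_subset_projections by blast
  have "proj_le b (\<lambda>x. \<Sum>a\<in>F. a x)" if "b \<in> G" for b
    using proj_le_trans[OF proj_le_summand[OF G(1,2) G_proj G(4) that] below] by blast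
  then have "(\<Sum>a\<in>F. b (X a) \<bullet> X a) = 1" if "b \<in> G" for b
    using trace_atom_below[OF F X] that G(3) by blast
  then have "(\<Sum>b\<in>G. \<Sum>a\<in>F. b (X a) \<bullet> X a) = card G"
    by simp
  then show ?thesis
    unfolding G(4) by (simp add: inner_sum_left sum.swap[of _ G])
qed

lemma no_descending_chain_if_purely_atomic:
  assumes "purely_atomic A"
  shows "\<not> (\<exists>f. \<forall>n. f n \<in> projections A \<and> proj_less (f (Suc n)) (f n))"
proof
  assume "\<exists>f. \<forall>n. f n \<in> projections A \<and> proj_less (f (Suc n)) (f n)"
  then obtain f where f: "\<And>n. f n \<in> projections A" "\<And>n. proj_less (f (Suc n)) (f n)"
    by blast
  obtain F where F: "finite F" "F \<subseteq> atoms A" "f 0 = (\<lambda>x. \<Sum>a\<in>F. a x)"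
    using assms f(1) unfolding purely_atomic_def by blast
  have "\<forall>a\<in>F. \<exists>v. a v = v \<and> norm v = 1"
    using atom_unit_vector F(2) by (metis subsetD)
  then obtain X where X: "\<And>a. a \<in> F \<Longrightarrow> a (X a) = X a" "\<And>a. a \<in> F \<Longrightarrow> norm (X a) = 1"
    by metis
  define trace where "trace q = (\<Sum>a\<in>F. q (X a) \<bullet> X a)" for q
  have below: "proj_le (f n) (f 0)" for n
    using proj_le_descending_chain_start f by blast
  have drop: "trace (f (Suc n)) + 1 \<le> trace (f n)" for n
  proof -
    define d where "d = (\<lambda>x. f n x - f (Suc n) x)"
    have "proj_le (f (Suc n)) (f n)" "f (Suc n) \<noteq> f n"
      using f(2)[of n] unfolding proj_less_def by auto
    then have d: "d \<in> projections A" "proj_le d (f 0)"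
      using diff_proj[OF f(1) f(1)] proj_le_trans below unfolding d_def by blast+
    obtain G where G: "finite G" "G \<subseteq> atoms A" "d = (\<lambda>x. \<Sum>b\<in>G. b x)"
      using assms d(1) unfolding purely_atomic_def by blast
    have "G \<noteq> {}"
      using G(3) \<open>f (Suc n) \<noteq> f n\<close> unfolding d_def by (auto simp: fun_eq_iff)
    then have "1 \<le> trace d"
      using trace_sum_atoms_below[OF F(1,2) X d(1) G] d(2) F(3) G(1) unfolding trace_def
      by (simp add: Suc_le_eq card_gt_0_iff)
    moreover have "trace d = trace (f n) - trace (f (Suc n))"
      unfolding trace_def d_def by (simp add: inner_diff_left sum_subtractf)
    ultimately show ?thesis
      by simp
  qed
  have "trace (f n) + n \<le> trace (f 0)" for n
    using drop by (induction n) (auto intro: order_trans[rotated])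
  moreover have "0 \<le> trace (f n)" for n
    unfolding trace_def using proj_inner_self[OF f(1)] by (simp add: sum_nonneg)
  moreover obtain n where "trace (f 0) < real n"
    using reals_Archimedean2 by blast
  ultimately show False
    by (smt (verit))
qed

end

theorem proposition5p8:
  fixes J :: "'h::{real_inner,complete_space} \<Rightarrow> 'h" and A :: "('h \<Rightarrow> 'h) set"
  assumes "R_star_algebra J A"
  shows "purely_atomic A \<longleftrightarrow>
           \<not> (\<exists>f :: nat \<Rightarrow> ('h \<Rightarrow> 'h). \<forall>n. f n \<in> projections A \<and> proj_less (f (Suc n)) (f n))"
proof -
  interpret R_star_subalgebra J A
    using assms unfolding R_star_algebra_def by unfold_locales auto
  show ?thesis
    using purely_atomic_if_no_descending_chain no_descending_chain_if_purely_atomic by blast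
qed

end
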